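(* Let $G=(V,E)$ be a finite graph and $G_0=(V,E_0)$ a spanning subgraph with $E_0\subseteq E$. Let $q\in\mathbb N$, $\beta\ge0$, and for a graph $H$ on vertex set $V$ let $P_H$ denote the transition matrix of the Swendsen--Wang dynamics for the $q$-state Potts model on $H$ at inverse temperature $\beta$. Then for all $\sigma,\tau\in\{1,\dots,q\}^V$, \[ a_1^{|E\setminus E_0|}\,P_{G_0}(\sigma,\tau)\;\le\;P_G(\sigma,\tau)\;\le\;a_2^{|E\setminus E_0|}\,P_{G_0}(\sigma,\tau), \] where $a_1=a_1(\beta)=e^{-\beta}$ and $a_2=a_2(\beta,q)=1+q(e^\beta-1)$.
   Context: Graphs are finite, parallel edges and loops allowed. For a graph $H=(V,F)$ and $A\subseteq F$, $c(A)$ is the number of connected components of $(V,A)$; for $\sigma\in\{1,\dots,q\}^V$, $F(\sigma)$ is the set of edges of $H$ whose endvertices have the same color in $\sigma$. With $p=1-e^{-\beta}$, the Swendsen--Wang transition matrix on $H$ is $P_H(\sigma,\tau)=(1-p)^{|F(\sigma)|}\sum_{A\subseteq F(\sigma)\cap F(\tau)}\bigl(\tfrac{p}{1-p}\bigr)^{|A|}q^{-c(A)}$. *)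

theory Defs
  imports Complex_Main "HOL-Library.FuncSet"
begin

text \<open>Multigraphs (parallel edges and loops allowed): a vertex set V, edge labels of
type 'e, and an endpoint map ends :: 'e => 'v * 'v. A graph on V is given by a finite
set of edge labels whose endpoints lie in V.\<close>

definition edge_rel :: "('e \<Rightarrow> 'v \<times> 'v) \<Rightarrow> 'e set \<Rightarrow> ('v \<times> 'v) set" where
  "edge_rel ends A = {(u, v). \<exists>e\<in>A. ends e = (u, v) \<or> ends e = (v, u)}"

definition ncomp :: "'v set \<Rightarrow> ('e \<Rightarrow> 'v \<times> 'v) \<Rightarrow> 'e set \<Rightarrow> nat" where
  "ncomp V ends A = card (V // ((edge_rel ends A)\<^sup>* \<inter> (V \<times> V)))"

definition mono_edges :: "('e \<Rightarrow> 'v \<times> 'v) \<Rightarrow> 'e set \<Rightarrow> ('v \<Rightarrow> nat) \<Rightarrow> 'e set" where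
  "mono_edges ends F \<sigma> = {e \<in> F. \<sigma> (fst (ends e)) = \<sigma> (snd (ends e))}"

definition SW_P :: "'v set \<Rightarrow> ('e \<Rightarrow> 'v \<times> 'v) \<Rightarrow> 'e set \<Rightarrow> nat \<Rightarrow> real
                     \<Rightarrow> ('v \<Rightarrow> nat) \<Rightarrow> ('v \<Rightarrow> nat) \<Rightarrow> real" where
  "SW_P V ends F q \<beta> \<sigma> \<tau> =
     (let p = 1 - exp (- \<beta>) in
      (1 - p) ^ card (mono_edges ends F \<sigma>) *
      (\<Sum>A \<in> Pow (mono_edges ends F \<sigma> \<inter> mono_edges ends F \<tau>).
          (p / (1 - p)) ^ card A * inverse (real q ^ ncomp V ends A)))"

end

theory Submission
  imports Defs
begin

text \<open>Write \<open>w = exp \<beta> - 1 = p / (1 - p)\<close>. Then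
\<open>P_H(\<sigma>, \<tau>) = exp (-\<beta> |F(\<sigma>)|) Z(F(\<sigma>) \<inter> F(\<tau>))\<close>, where
\<open>Z(N) = \<Sum>A \<subseteq> N. w^|A| q^(-c(A))\<close> is a random-cluster partition function.
Adding an edge \<open>e\<close> to \<open>H\<close> multiplies the first factor by \<open>1\<close> or \<open>exp (-\<beta>)\<close> and
enlarges \<open>N\<close> by at most \<open>e\<close>. \<open>Z\<close> is monotone in \<open>N\<close>, and since adding \<open>e\<close> to \<open>A\<close>
merges at most two components, \<open>q^(-c(A \<union> {e})) \<le> q \<cdot> q^(-c(A))\<close>; so the subsets
containing \<open>e\<close> contribute at most \<open>q w Z(N)\<close>. Each added edge therefore changes \<open>P_H\<close> by a
factor between \<open>exp (-\<beta>)\<close> and \<open>1 + q w\<close>; induct over \<open>E - E\<^sub>0\<close>.\<close>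

lemma sym_rtrancl_edge_rel: "sym ((edge_rel ends A)\<^sup>*)"
  by (rule sym_rtrancl) (auto simp: sym_def edge_rel_def)

lemma rtrancl_edge_rel_insert:
  assumes e: "ends e = (u, v)"
    and ab: "(a, b) \<in> (edge_rel ends (insert e A))\<^sup>*"
  defines "S \<equiv> (edge_rel ends A)\<^sup>*"
  shows "(a, b) \<in> S \<or> (a, u) \<in> S \<and> (v, b) \<in> S \<or> (a, v) \<in> S \<and> (u, b) \<in> S"
  using ab
proof (induction rule: rtrancl_induct)
  case base
  show ?case by (simp add: S_def)
next
  case (step b c)
  have S_sym: "(x, y) \<in> S \<Longrightarrow> (y, x) \<in> S" for x y
    using sym_rtrancl_edge_rel unfolding S_def by (metis symD)
  have S_trans: "(x, y) \<in> S \<Longrightarrow> (y, z) \<in> S \<Longrightarrow> (x, z) \<in> S" for x y z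
    unfolding S_def by (rule rtrancl_trans)
  from step.hyps(2) obtain e' where e': "e' \<in> insert e A" "ends e' = (b, c) \<or> ends e' = (c, b)"
    unfolding edge_rel_def by blast
  show ?case
  proof (cases "e' \<in> A")
    case True
    then have "(b, c) \<in> S"
      using e'(2) unfolding S_def by (intro r_into_rtrancl) (auto simp: edge_rel_def)
    with step.IH show ?thesis using S_trans by blast
  next
    case False
    with e' assms(1) consider "b = u" "c = v" | "b = v" "c = u" by auto
    then show ?thesis
    proof cases
      case 1
      then show ?thesis using step.IH S_sym[of v u] S_trans[of a u v] by (auto simp: S_def)
    next
      case 2
      then show ?thesis using step.IH S_sym[of u v] S_trans[of a v u] by (auto simp: S_def)
    qed
  qed
qed

lemma ncomp_le_Suc_ncomp_insert:
  assumes "finite V" and "fst (ends e) \<in> V"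
  shows "ncomp V ends A \<le> Suc (ncomp V ends (insert e A))"
proof -
  obtain u v where e: "ends e = (u, v)" by fastforce
  define S where "S = (edge_rel ends A)\<^sup>*"
  define R where "R = S \<inter> V \<times> V"
  define R' where "R' = (edge_rel ends (insert e A))\<^sup>* \<inter> V \<times> V"
  have equiv_Restr: "equiv V ((edge_rel ends B)\<^sup>* \<inter> V \<times> V)" for B
    using sym_rtrancl_edge_rel[of ends B]
    by (auto simp: equiv_def refl_on_def sym_def trans_def intro: rtrancl_trans)
  have "equiv V R" "equiv V R'" unfolding R_def S_def R'_def by (fact equiv_Restr)+
  have S_R': "S \<inter> V \<times> V \<subseteq> R'"
    unfolding S_def R'_def by (auto elim: rtrancl_mono[THEN subsetD, rotated] simp: edge_rel_def)
  have same_class: "R `` {a} = R `` {b}" if "(a, b) \<in> S" "a \<in> V" "b \<in> V" for a b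
    using equiv_class_eq[OF \<open>equiv V R\<close>] that unfolding R_def by blast
  have "u \<in> V" using assms(2) e by simp
  let ?Cu = "R `` {u}"
  text \<open>Only the class of \<open>u\<close> can merge with another class when \<open>e\<close> is added.\<close>
  have "inj_on (\<lambda>X. R' `` X) (V // R - {?Cu})"
  proof (rule inj_onI)
    fix X Y assume X: "X \<in> V // R - {?Cu}" and Y: "Y \<in> V // R - {?Cu}"
      and XY: "R' `` X = R' `` Y"
    obtain x y where x: "x \<in> V" "X = R `` {x}" and y: "y \<in> V" "Y = R `` {y}"
      using X Y by (auto elim!: quotientE)
    have "(x, x) \<in> R" "(x, x) \<in> R'" using x(1) unfolding R_def S_def R'_def by auto
    with XY x(2) have "x \<in> R' `` Y" by blast
    then obtain y' where y': "(y, y') \<in> S" "y' \<in> V"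
        and "(y', x) \<in> (edge_rel ends (insert e A))\<^sup>*"
      using y unfolding R_def R'_def by auto
    then consider "(y', x) \<in> S" | "(y', u) \<in> S" | "(u, x) \<in> S"
      using rtrancl_edge_rel_insert[where ends = ends, OF e] unfolding S_def by blast
    then show "X = Y"
    proof cases
      case 1
      then show ?thesis using same_class x y y' by (metis S_def rtrancl_trans)
    next
      case 2
      then have "Y = ?Cu" using same_class y y' \<open>u \<in> V\<close> by (metis S_def rtrancl_trans)
      with Y show ?thesis by blast
    next
      case 3
      then have "X = ?Cu" using same_class x \<open>u \<in> V\<close> by metis
      with X show ?thesis by blast
    qed
  qed
  moreover have "(\<lambda>X. R' `` X) ` (V // R - {?Cu}) \<subseteq> V // R'"
  proof
    fix Z assume "Z \<in> (\<lambda>X. R' `` X) ` (V // R - {?Cu})"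
    then obtain x where x: "x \<in> V" "Z = R' `` (R `` {x})" by (auto elim!: quotientE)
    have "R' `` (R `` {x}) = R' `` {x}"
    proof
      show "R' `` (R `` {x}) \<subseteq> R' `` {x}"
        using S_R' \<open>equiv V R'\<close> unfolding R_def by (auto simp: equiv_def dest: transD)
      show "R' `` {x} \<subseteq> R' `` (R `` {x})" using x(1) unfolding R_def S_def by auto
    qed
    with x show "Z \<in> V // R'" by (auto intro: quotientI)
  qed
  moreover have "finite (V // R')" using \<open>finite V\<close> \<open>equiv V R'\<close>
    by (simp add: finite_quotient equiv_type)
  ultimately have "card (V // R - {?Cu}) \<le> card (V // R')" by (rule card_inj_on_le)
  moreover have "card (V // R) \<le> Suc (card (V // R - {?Cu}))"
    using finite_quotient[OF \<open>finite V\<close> equiv_type[OF \<open>equiv V R\<close>]]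
    by (cases "?Cu \<in> V // R") (auto simp: card_Diff_singleton)
  ultimately have "card (V // R) \<le> Suc (card (V // R'))" by linarith
  then show ?thesis by (simp only: ncomp_def R_def S_def R'_def)
qed

lemma inverse_power_ncomp_insert_le:
  fixes q :: real
  assumes "q \<ge> 1" and "finite V" and "fst (ends e) \<in> V"
  shows "inverse (q ^ ncomp V ends (insert e A)) \<le> q * inverse (q ^ ncomp V ends A)"
proof -
  have "q ^ ncomp V ends A \<le> q ^ Suc (ncomp V ends (insert e A))"
    using ncomp_le_Suc_ncomp_insert[where ends = ends, OF assms(2,3)] assms(1)
    by (rule power_increasing)
  with assms(1) show ?thesis by (simp add: field_simps)
qed

definition rc_partition :: "'v set \<Rightarrow> ('e \<Rightarrow> 'v \<times> 'v) \<Rightarrow> real \<Rightarrow> real \<Rightarrow> 'e set \<Rightarrow> real" where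
  "rc_partition V ends q w N = (\<Sum>A \<in> Pow N. w ^ card A * inverse (q ^ ncomp V ends A))"

lemma rc_partition_nonneg:
  "q \<ge> 0 \<Longrightarrow> w \<ge> 0 \<Longrightarrow> rc_partition V ends q w N \<ge> 0"
  unfolding rc_partition_def by (intro sum_nonneg) simp

lemma rc_partition_insert:
  assumes "finite N" and "e \<notin> N"
  shows "rc_partition V ends q w (insert e N) = rc_partition V ends q w N
           + w * (\<Sum>A \<in> Pow N. w ^ card A * inverse (q ^ ncomp V ends (insert e A)))"
proof -
  let ?t = "\<lambda>A. w ^ card A * inverse (q ^ ncomp V ends A)"
  have "inj_on (insert e) (Pow N)"
    using assms(2) by (intro inj_onI) (metis PowD insert_ident subsetD)
  have "Pow N \<inter> insert e ` Pow N = {}" using assms(2) by blast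
  then have "rc_partition V ends q w (insert e N) = sum ?t (Pow N) + sum ?t (insert e ` Pow N)"
    unfolding rc_partition_def Pow_insert using assms(1) by (intro sum.union_disjoint) auto
  also have "sum ?t (insert e ` Pow N) = sum (?t \<circ> insert e) (Pow N)"
    using \<open>inj_on (insert e) (Pow N)\<close> by (rule sum.reindex)
  also have "sum (?t \<circ> insert e) (Pow N)
      = w * (\<Sum>A \<in> Pow N. w ^ card A * inverse (q ^ ncomp V ends (insert e A)))"
    unfolding sum_distrib_left
  proof (rule sum.cong)
    fix A assume "A \<in> Pow N"
    then have "finite A" "e \<notin> A" using assms finite_subset by auto
    then have "card (insert e A) = Suc (card A)" by simp
    then show "(?t \<circ> insert e) A = w * (w ^ card A * inverse (q ^ ncomp V ends (insert e A)))"
      unfolding comp_def by (simp only: power_Suc mult.assoc)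
  qed simp
  finally show ?thesis unfolding rc_partition_def .
qed

lemma rc_partition_mono:
  assumes "finite N'" and "N \<subseteq> N'" and "q \<ge> 0" and "w \<ge> 0"
  shows "rc_partition V ends q w N \<le> rc_partition V ends q w N'"
  unfolding rc_partition_def using assms by (intro sum_mono2) auto

lemma rc_partition_insert_le:
  fixes q w :: real
  assumes "finite N" and "q \<ge> 1" and "w \<ge> 0" and "finite V" and "fst (ends e) \<in> V"
  shows "rc_partition V ends q w (insert e N) \<le> (1 + q * w) * rc_partition V ends q w N"
proof (cases "e \<in> N")
  case True
  have "1 * rc_partition V ends q w N \<le> (1 + q * w) * rc_partition V ends q w N"
    using rc_partition_nonneg[of q w] assms(2,3) by (intro mult_right_mono) auto
  with True show ?thesis by (simp add: insert_absorb)
next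
  case False
  let ?S = "\<Sum>A \<in> Pow N. w ^ card A * inverse (q ^ ncomp V ends (insert e A))"
  have "?S \<le> (\<Sum>A \<in> Pow N. w ^ card A * (q * inverse (q ^ ncomp V ends A)))"
    using inverse_power_ncomp_insert_le[where ends = ends, OF assms(2,4,5)] assms(3)
    by (intro sum_mono mult_left_mono) auto
  also have "\<dots> = q * rc_partition V ends q w N"
    by (simp add: rc_partition_def sum_distrib_left mult.left_commute)
  finally have "w * ?S \<le> w * (q * rc_partition V ends q w N)"
    using assms(3) by (rule mult_left_mono)
  then show ?thesis
    unfolding rc_partition_insert[OF assms(1) False] by (simp add: algebra_simps)
qed

lemma rc_partition_between_insert:
  fixes q w :: real
  assumes "finite N" and "N \<subseteq> N'" and "N' \<subseteq> insert e N"
    and "q \<ge> 1" and "w \<ge> 0" and "finite V" and "fst (ends e) \<in> V"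
  shows "rc_partition V ends q w N \<le> rc_partition V ends q w N'"
    and "rc_partition V ends q w N' \<le> (1 + q * w) * rc_partition V ends q w N"
proof -
  have "finite N'" using assms(1,3) by (simp add: finite_subset)
  then show "rc_partition V ends q w N \<le> rc_partition V ends q w N'"
    using assms by (intro rc_partition_mono) auto
  have "rc_partition V ends q w N' \<le> rc_partition V ends q w (insert e N)"
    using assms by (intro rc_partition_mono) auto
  also have "\<dots> \<le> (1 + q * w) * rc_partition V ends q w N"
    using assms by (intro rc_partition_insert_le)
  finally show "rc_partition V ends q w N' \<le> (1 + q * w) * rc_partition V ends q w N" .
qed

lemma mono_edges_insert_bounds:
  "mono_edges ends F \<sigma> \<subseteq> mono_edges ends (insert e F) \<sigma>"
  "mono_edges ends (insert e F) \<sigma> \<subseteq> insert e (mono_edges ends F \<sigma>)"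
  by (auto simp: mono_edges_def)

lemma card_mono_edges_insert:
  assumes "finite F"
  shows "card (mono_edges ends F \<sigma>) \<le> card (mono_edges ends (insert e F) \<sigma>)"
    and "card (mono_edges ends (insert e F) \<sigma>) \<le> Suc (card (mono_edges ends F \<sigma>))"
proof -
  have "finite (mono_edges ends (insert e F) \<sigma>)"
    using assms by (simp add: mono_edges_def)
  then show "card (mono_edges ends F \<sigma>) \<le> card (mono_edges ends (insert e F) \<sigma>)"
    by (rule card_mono) (rule mono_edges_insert_bounds)
  have "finite (mono_edges ends F \<sigma>)" using assms by (simp add: mono_edges_def)
  then have "card (insert e (mono_edges ends F \<sigma>)) \<le> Suc (card (mono_edges ends F \<sigma>))"
    by (simp add: card_insert_if)
  with card_mono[OF _ mono_edges_insert_bounds(2)] \<open>finite (mono_edges ends F \<sigma>)\<close>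
  show "card (mono_edges ends (insert e F) \<sigma>) \<le> Suc (card (mono_edges ends F \<sigma>))"
    by (meson finite_insert order_trans)
qed

lemma SW_P_eq_rc_partition:
  "SW_P V ends F q \<beta> \<sigma> \<tau> = exp (- \<beta>) ^ card (mono_edges ends F \<sigma>) *
     rc_partition V ends (real q) (exp \<beta> - 1) (mono_edges ends F \<sigma> \<inter> mono_edges ends F \<tau>)"
proof -
  have "(1 - exp (- \<beta>)) / (1 - (1 - exp (- \<beta>))) = exp \<beta> - 1"
    by (simp add: exp_minus field_simps)
  then show ?thesis unfolding SW_P_def rc_partition_def Let_def by simp
qed

lemma SW_P_insert_bounds:
  assumes "finite F" and "\<beta> \<ge> 0" and "q \<ge> 1" and "finite V" and "fst (ends e) \<in> V"
  shows "exp (- \<beta>) * SW_P V ends F q \<beta> \<sigma> \<tau> \<le> SW_P V ends (insert e F) q \<beta> \<sigma> \<tau>"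
    and "SW_P V ends (insert e F) q \<beta> \<sigma> \<tau> \<le> (1 + real q * (exp \<beta> - 1)) * SW_P V ends F q \<beta> \<sigma> \<tau>"
proof -
  let ?x = "exp (- \<beta>)" and ?Z = "rc_partition V ends (real q) (exp \<beta> - 1)"
  define M where "M = mono_edges ends F \<sigma>"
  define M' where "M' = mono_edges ends (insert e F) \<sigma>"
  define N where "N = M \<inter> mono_edges ends F \<tau>"
  define N' where "N' = M' \<inter> mono_edges ends (insert e F) \<tau>"
  have card_M': "card M \<le> card M'" "card M' \<le> Suc (card M)"
    unfolding M_def M'_def using assms(1) by (rule card_mono_edges_insert)+
  have "finite N" using assms(1) by (simp add: N_def M_def mono_edges_def)
  moreover have "N \<subseteq> N'" "N' \<subseteq> insert e N"
    unfolding N_def N'_def M_def M'_def by (auto simp: mono_edges_def)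
  ultimately have Z_mono: "?Z N \<le> ?Z N'"
    and Z_insert: "?Z N' \<le> (1 + real q * (exp \<beta> - 1)) * ?Z N"
    using rc_partition_between_insert[where ends = ends and q = "real q" and w = "exp \<beta> - 1"] assms
    by auto
  have "0 \<le> ?Z N" using assms(2) by (intro rc_partition_nonneg) auto
  have x: "0 \<le> ?x" "?x \<le> 1" using assms(2) by auto
  have P: "SW_P V ends F q \<beta> \<sigma> \<tau> = ?x ^ card M * ?Z N"
    "SW_P V ends (insert e F) q \<beta> \<sigma> \<tau> = ?x ^ card M' * ?Z N'"
    by (simp_all only: SW_P_eq_rc_partition M_def M'_def N_def N'_def)
  have "?x * (?x ^ card M * ?Z N) = ?x ^ Suc (card M) * ?Z N" by simp
  also have "\<dots> \<le> ?x ^ card M' * ?Z N"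
    using card_M'(2) x \<open>0 \<le> ?Z N\<close> by (intro mult_right_mono power_decreasing) auto
  also have "\<dots> \<le> ?x ^ card M' * ?Z N'" using Z_mono by (intro mult_left_mono) auto
  finally show "?x * SW_P V ends F q \<beta> \<sigma> \<tau> \<le> SW_P V ends (insert e F) q \<beta> \<sigma> \<tau>"
    unfolding P .
  have "?x ^ card M' * ?Z N' \<le> ?x ^ card M * ?Z N'"
    using card_M'(1) x \<open>0 \<le> ?Z N\<close> Z_mono by (intro mult_right_mono power_decreasing) auto
  also have "\<dots> \<le> ?x ^ card M * ((1 + real q * (exp \<beta> - 1)) * ?Z N)"
    using Z_insert by (intro mult_left_mono) auto
  finally show "SW_P V ends (insert e F) q \<beta> \<sigma> \<tau>
      \<le> (1 + real q * (exp \<beta> - 1)) * SW_P V ends F q \<beta> \<sigma> \<tau>"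
    unfolding P by (simp add: mult.left_commute)
qed

lemma SW_P_union_lower_bound:
  assumes "finite F" and "finite D" and "\<forall>e\<in>D. fst (ends e) \<in> V"
    and "\<beta> \<ge> 0" and "q \<ge> 1" and "finite V"
  shows "exp (- \<beta>) ^ card D * SW_P V ends F q \<beta> \<sigma> \<tau> \<le> SW_P V ends (F \<union> D) q \<beta> \<sigma> \<tau>"
  using assms(2,3)
proof (induction D rule: finite_induct)
  case (insert e D)
  have "exp (- \<beta>) ^ card (insert e D) * SW_P V ends F q \<beta> \<sigma> \<tau>
      = exp (- \<beta>) * (exp (- \<beta>) ^ card D * SW_P V ends F q \<beta> \<sigma> \<tau>)"
    using insert.hyps by simp
  also have "\<dots> \<le> exp (- \<beta>) * SW_P V ends (F \<union> D) q \<beta> \<sigma> \<tau>"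
    using insert.IH insert.prems by (intro mult_left_mono) auto
  also have "\<dots> \<le> SW_P V ends (insert e (F \<union> D)) q \<beta> \<sigma> \<tau>"
    using insert assms by (intro SW_P_insert_bounds(1)) auto
  finally show ?case by simp
qed simp

lemma SW_P_union_upper_bound:
  assumes "finite F" and "finite D" and "\<forall>e\<in>D. fst (ends e) \<in> V"
    and "\<beta> \<ge> 0" and "q \<ge> 1" and "finite V"
  shows "SW_P V ends (F \<union> D) q \<beta> \<sigma> \<tau>
           \<le> (1 + real q * (exp \<beta> - 1)) ^ card D * SW_P V ends F q \<beta> \<sigma> \<tau>"
  using assms(2,3)
proof (induction D rule: finite_induct)
  case (insert e D)
  let ?a = "1 + real q * (exp \<beta> - 1)"
  have "SW_P V ends (F \<union> insert e D) q \<beta> \<sigma> \<tau> \<le> ?a * SW_P V ends (F \<union> D) q \<beta> \<sigma> \<tau>"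
    using insert assms by (simp add: SW_P_insert_bounds(2))
  also have "\<dots> \<le> ?a * (?a ^ card D * SW_P V ends F q \<beta> \<sigma> \<tau>)"
    using insert.IH insert.prems assms(4) by (intro mult_left_mono) auto
  also have "\<dots> = ?a ^ card (insert e D) * SW_P V ends F q \<beta> \<sigma> \<tau>"
    using insert.hyps by simp
  finally show ?case .
qed simp

theorem lemma3p7:
  fixes V :: "'v set" and E E0 :: "'e set" and ends :: "'e \<Rightarrow> 'v \<times> 'v"
    and q :: nat and \<beta> :: real and \<sigma> \<tau> :: "'v \<Rightarrow> nat"
  assumes "finite V" and "finite E"
    and "\<forall>e\<in>E. fst (ends e) \<in> V \<and> snd (ends e) \<in> V"
    and "E0 \<subseteq> E"
    and "\<beta> \<ge> 0"
    and "\<sigma> \<in> V \<rightarrow>\<^sub>E {1..q}" and "\<tau> \<in> V \<rightarrow>\<^sub>E {1..q}"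
  shows "exp (- \<beta>) ^ card (E - E0) * SW_P V ends E0 q \<beta> \<sigma> \<tau> \<le> SW_P V ends E q \<beta> \<sigma> \<tau>
       \<and> SW_P V ends E q \<beta> \<sigma> \<tau>
           \<le> (1 + real q * (exp \<beta> - 1)) ^ card (E - E0) * SW_P V ends E0 q \<beta> \<sigma> \<tau>"
proof (cases "q = 0")
  case True
  with assms(6) have "V = {}" by fastforce
  with assms(3,4) show ?thesis by auto
next
  case False
  then have "q \<ge> 1" by simp
  have "finite E0" "finite (E - E0)" using assms(2,4) finite_subset by auto
  moreover have "\<forall>e\<in>E - E0. fst (ends e) \<in> V" using assms(3) by blast
  ultimately have
    "exp (- \<beta>) ^ card (E - E0) * SW_P V ends E0 q \<beta> \<sigma> \<tau>
       \<le> SW_P V ends (E0 \<union> (E - E0)) q \<beta> \<sigma> \<tau>"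
    "SW_P V ends (E0 \<union> (E - E0)) q \<beta> \<sigma> \<tau>
       \<le> (1 + real q * (exp \<beta> - 1)) ^ card (E - E0) * SW_P V ends E0 q \<beta> \<sigma> \<tau>"
    using \<open>q \<ge> 1\<close> assms(1,5) by (blast intro: SW_P_union_lower_bound SW_P_union_upper_bound)+
  moreover have "E0 \<union> (E - E0) = E" using assms(4) by blast
  ultimately show ?thesis by simp
qed

end
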